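(* Let $\alpha,n\in\mathbb{Q}$ with $n\neq0$. The elliptic curve $$E_{\alpha,-n^2}:\ y^2=x^3+\alpha x^2-n^2x$$ has no rational point of order $5$. *)

theory Defs
  imports Main "HOL.Rat"
begin

datatype ecpt = Inf | Pt rat rat

definition on_curve :: "rat \<Rightarrow> rat \<Rightarrow> ecpt \<Rightarrow> bool" where
  "on_curve a b P = (case P of Inf \<Rightarrow> True
      | Pt x y \<Rightarrow> y^2 = x^3 + a * x^2 + b * x)"

definition ec_add :: "rat \<Rightarrow> rat \<Rightarrow> ecpt \<Rightarrow> ecpt \<Rightarrow> ecpt" where
  "ec_add a b P Q = (case P of Inf \<Rightarrow> Q | Pt x1 y1 \<Rightarrow>
     (case Q of Inf \<Rightarrow> P | Pt x2 y2 \<Rightarrow>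
       (if x1 = x2 \<and> y1 = - y2 then Inf
        else let l = (if x1 = x2 then (3 * x1^2 + 2 * a * x1 + b) / (2 * y1)
                      else (y2 - y1) / (x2 - x1));
                 x3 = l^2 - a - x1 - x2;
                 y3 = - (y1 + l * (x3 - x1))
             in Pt x3 y3)))"

fun ec_smul :: "rat \<Rightarrow> rat \<Rightarrow> nat \<Rightarrow> ecpt \<Rightarrow> ecpt" where
  "ec_smul a b 0 P = Inf"
| "ec_smul a b (Suc k) P = ec_add a b P (ec_smul a b k P)"

definition has_order :: "rat \<Rightarrow> rat \<Rightarrow> ecpt \<Rightarrow> nat \<Rightarrow> bool" where
  "has_order a b P k = (0 < k \<and> ec_smul a b k P = Inf \<and>
      (\<forall>j. 0 < j \<and> j < k \<longrightarrow> ec_smul a b j P \<noteq> Inf))"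

end

theory Submission
  imports Defs "HOL-Computational_Algebra.Nth_Powers"
begin

text \<open>If P has order 5 then 4P = -P and 3P = -2P, so the abscissa z of 2P arises from the
abscissa x of P by the tangent construction and, symmetrically, x arises from z. On
y^2 = x (x^2 + \<alpha> x - n^2) the tangent construction sends x to ((x^2 + n^2) / (2y))^2, so x and z
are non-zero rational squares, and eliminating \<alpha> from the two tangent relations gives
x z (x + z)^2 = 5 (x z)^2 + 2 n^2 x z + n^4. Writing x z = p^2 this is a rational point with
p \<noteq> 0 on w^2 = 5 p^4 + 2 p^2 n^2 + n^4, and Fermat descent shows there is none: for a primitive
solution a is even, w^2 = (a^2 + c^2)^2 + 4 a^4 splits a^4 into coprime fourth powers, giving
u^4 = c^2 + u^2 v^2 + v^4 with a = u v and v even, and the same splitting applied to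
(u^2 - v^2/2)^2 = c^2 + 20 (v/2)^4 produces a solution with a smaller first coordinate.\<close>

section \<open>Fermat descent for w^2 = 5 a^4 + 2 a^2 c^2 + c^4\<close>

lemma odd_square_eq_8_mult_plus_1: "odd (x::nat) \<Longrightarrow> \<exists>k. x^2 = 8*k + 1"
proof -
  assume "odd x"
  then obtain j where j: "x = 2*j + 1" by (metis oddE)
  obtain i where "j*(j+1) = 2*i" by (metis evenE even_mult_iff odd_even_add odd_one)
  hence "x^2 = 8*i + 1" by (simp add: j power2_eq_square algebra_simps)
  thus ?thesis ..
qed

lemma square_mod_16: "(x::nat)^2 mod 16 \<in> {0, 1, 4, 9}"
proof -
  have "x mod 16 < 16" by simp
  hence "x mod 16 \<in> {..<16}" by simp
  hence "(x mod 16)^2 mod 16 \<in> {0, 1, 4, 9}" by (auto simp: lessThan_nat_numeral)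
  thus ?thesis by (simp add: power_mod)
qed

lemma square_mod_5: "(x::nat)^2 mod 5 \<in> {0, 1, 4}"
proof -
  have "x mod 5 < 5" by simp
  hence "x mod 5 \<in> {..<5}" by simp
  hence "(x mod 5)^2 mod 5 \<in> {0, 1, 4}" by (auto simp: lessThan_nat_numeral)
  thus ?thesis by (simp add: power_mod)
qed

lemma five_dvd_if_square_eq_add_twice_square:
  fixes u v m :: nat
  assumes "u^2 = m + 2*v^2" "5 dvd m"
  shows "5 dvd u \<and> 5 dvd v"
proof -
  have "u^2 mod 5 = 2*(v^2 mod 5) mod 5"
    using assms by (simp add: mod_add_eq[symmetric] mod_mult_right_eq)
  hence "5 dvd u^2 \<and> 5 dvd v^2" using square_mod_5[of u] square_mod_5[of v] by auto
  thus ?thesis using prime_dvd_power[of "5::nat"] by auto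
qed

lemma square_eq_square_add_4_mult:
  fixes x y k :: nat
  assumes "x^2 = y^2 + 4*k"
  obtains d where "x = y + 2*d" "d*(y + d) = k"
proof -
  have "y^2 \<le> x^2" using assms by simp
  hence "y \<le> x" by (simp add: power2_nat_le_eq_le)
  then obtain e where e: "x = y + e" using le_Suc_ex by blast
  hence ek: "e*(2*y + e) = 4*k" using assms by (simp add: power2_eq_square algebra_simps)
  have "even (e*(2*y + e))" unfolding ek by simp
  then obtain d where d: "e = 2*d" by auto
  hence "4*(d*(y + d)) = 4*k" using ek by (simp add: algebra_simps)
  thus ?thesis using that e d by simp
qed

lemma coprime_mult_eq_fourth_power:
  fixes a b t :: nat
  assumes "coprime a b" "a * b = t^4"
  obtains u v where "a = u^4" "b = v^4" "t = u*v"
proof -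
  obtain u v where uv: "a = u^4" "b = v^4"
  proof (cases "a = 0 \<or> b = 0")
    case True
    with assms(1) have "a = 0^4 \<and> b = 1^4 \<or> a = 1^4 \<and> b = 0^4" by auto
    thus ?thesis using that by blast
  next
    case False
    have "is_nth_power 4 (a * b)" using assms(2) by auto
    with assms(1) False show ?thesis
      using that is_nth_power_mult_coprime_natD[of a b 4] by (auto elim!: is_nth_powerE)
  qed
  moreover have "t^4 = (u*v)^4" using assms(2) uv by (simp add: power_mult_distrib)
  hence "t = u*v" by (simp add: power_eq_iff_eq_base)
  ultimately show ?thesis using that by blast
qed

lemma coprime_mult_eq_five_fourth_power:
  fixes a b t :: nat
  assumes "coprime a b" "a * b = 5 * t^4"
  obtains g h where "t = g*h" "a = 5*g^4 \<and> b = h^4 \<or> a = g^4 \<and> b = 5*h^4"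
proof -
  have "prime (5::nat)" by simp
  moreover have "5 dvd a * b" using assms(2) by simp
  ultimately have "5 dvd a \<or> 5 dvd b" by (simp add: prime_dvd_mult_iff)
  thus ?thesis
  proof
    assume "5 dvd a"
    then obtain a' where a': "a = 5*a'" ..
    with assms obtain g h where "a' = g^4" "b = h^4" "t = g*h"
      by (auto elim: coprime_mult_eq_fourth_power[of a' b t])
    thus ?thesis using that a' by blast
  next
    assume "5 dvd b"
    then obtain b' where b': "b = 5*b'" ..
    with assms obtain g h where "a = g^4" "b' = h^4" "t = g*h"
      by (auto elim: coprime_mult_eq_fourth_power[of a b' t])
    thus ?thesis using that b' by blast
  qed
qed

lemma coprime_mult_add_iff: "coprime (k*y + x) (y::nat) \<longleftrightarrow> coprime x y"
  by (metis coprime_iff_gcd_eq_1 gcd.commute gcd_add_mult)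

lemma quartic_square_coprime_reduction:
  fixes a c w :: nat
  assumes "0 < a" "w^2 = 5*a^4 + 2*a^2*c^2 + c^4"
  obtains a' c' w' where "0 < a'" "a' \<le> a" "coprime a' c'"
    "w'^2 = 5*a'^4 + 2*a'^2*c'^2 + c'^4"
proof -
  define d where "d = gcd a c"
  have "d > 0" using assms(1) unfolding d_def by simp
  then obtain a' c' where a': "a = a'*d" and c': "c = c'*d" and cop: "coprime a' c'"
    using gcd_coprime_exists[of a c] unfolding d_def by auto
  have w: "w^2 = (d^2)^2 * (5*a'^4 + 2*a'^2*c'^2 + c'^4)"
    using assms(2) by (simp add: a' c' power_mult_distrib algebra_simps flip: power_mult)
  hence "(d^2)^2 dvd w^2" by simp
  hence "d^2 dvd w" using pow_divides_pow_iff[of 2 "d^2" w] by simp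
  then obtain w' where "w = d^2 * w'" ..
  hence "w'^2 = 5*a'^4 + 2*a'^2*c'^2 + c'^4"
    using w \<open>d > 0\<close> by (simp add: power_mult_distrib)
  moreover have "0 < a'" "a' \<le> a" using assms(1) a' \<open>d > 0\<close> by auto
  ultimately show ?thesis using that cop by blast
qed

lemma quartic_square_parity:
  fixes a c w :: nat
  assumes "coprime a c" "w^2 = 5*a^4 + 2*a^2*c^2 + c^4"
  shows "even a"
proof (rule ccontr)
  assume "odd a"
  then obtain i where i: "a^2 = 8*i + 1" using odd_square_eq_8_mult_plus_1 by blast
  have w: "w^2 = 5*(a^2)^2 + 2*a^2*c^2 + (c^2)^2" using assms(2) by (simp flip: power_mult)
  obtain K where "w^2 = 16*K + 8 \<or> w^2 = 8*K + 5"
  proof (cases "even c")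
    case True
    then obtain j where "c = 2*j" ..
    hence "w^2 = 5*(8*i + 1)^2 + 2*(8*i + 1)*(4*j^2) + (4*j^2)^2" using w i by simp
    hence "w^2 = 8*(40*i^2 + 10*i + 8*i*j^2 + j^2 + 2*j^4) + 5"
      by (simp add: power2_eq_square power4_eq_xxxx algebra_simps)
    thus ?thesis using that by blast
  next
    case False
    then obtain j where j: "c^2 = 8*j + 1" using odd_square_eq_8_mult_plus_1 by blast
    have "w^2 = 5*(8*i + 1)^2 + 2*(8*i + 1)*(8*j + 1) + (8*j + 1)^2" using w i j by simp
    hence "w^2 = 16*(20*i^2 + 6*i + 8*i*j + 4*j^2 + 2*j) + 8"
      by (simp add: power2_eq_square algebra_simps)
    thus ?thesis using that by blast
  qed
  thus False using square_mod_16[of w] by auto presburger+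
qed

lemma quartic_square_factor:
  fixes a c w :: nat
  assumes "coprime a c" "w^2 = 5*a^4 + 2*a^2*c^2 + c^4"
  obtains u v where "a = u*v" "coprime u v" "u^4 = c^2 + u^2*v^2 + v^4"
proof -
  define s where "s = a^2 + c^2"
  have "w^2 = s^2 + 4*a^4"
    using assms(2) unfolding s_def by (simp add: power2_eq_square power4_eq_xxxx algebra_simps)
  then obtain d where d: "w = s + 2*d" "d*(s + d) = a^4" by (rule square_eq_square_add_4_mult)
  have "coprime s a" using assms(1) coprime_mult_add_iff[of a a "c^2"]
    unfolding s_def by (simp add: power2_eq_square coprime_commute)
  hence cop_s: "coprime s (a^4)" by simp
  have "coprime d (s + d)"
  proof (rule coprimeI)
    fix g assume "g dvd d" "g dvd s + d"
    moreover from this have "g dvd s" "g dvd a^4"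
      using d(2) by (auto simp: dvd_add_left_iff dvd_mult2 simp flip: d(2))
    ultimately show "is_unit g" using cop_s coprime_common_divisor by blast
  qed
  then obtain v u where uv: "d = v^4" "s + d = u^4" "a = v*u"
    using d(2) by (rule coprime_mult_eq_fourth_power)
  have "coprime u v" using \<open>coprime d (s + d)\<close> uv by (simp add: coprime_commute)
  moreover have "u^4 = c^2 + u^2*v^2 + v^4"
    using uv unfolding s_def by (simp add: power_mult_distrib algebra_simps)
  ultimately show ?thesis using that uv(3) by (simp add: mult.commute)
qed

lemma quartic_factor_odd:
  fixes c u v :: nat
  assumes "odd c" "u^4 = c^2 + u^2*v^2 + v^4"
  shows "odd u"
proof
  assume "even u"
  then obtain k where k: "u = 2*k" ..
  have "odd v"
  proof
    assume "even v"
    hence "even (c^2 + u^2*v^2 + v^4)" using \<open>even u\<close> by (simp flip: assms(2))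
    thus False using assms(1) \<open>even u\<close> \<open>even v\<close> by simp
  qed
  obtain i j where i: "c^2 = 8*i + 1" and j: "v^2 = 8*j + 1"
    using odd_square_eq_8_mult_plus_1 assms(1) \<open>odd v\<close> by metis
  have "u^4 = c^2 + u^2*v^2 + (v^2)^2" using assms(2) by (simp flip: power_mult)
  hence "(2*k)^4 = (8*i + 1) + (2*k)^2*(8*j + 1) + (8*j + 1)^2" unfolding i j k .
  hence "4*(4*k^4) = 4*(2*i + k^2*(8*j + 1) + 16*j^2 + 4*j) + 2"
    by (simp add: power2_eq_square algebra_simps)
  thus False by presburger
qed

lemma quartic_descent_step:
  fixes c u t :: nat
  assumes "coprime u t" "0 < t" "u^4 = c^2 + u^2*(2*t)^2 + (2*t)^4"
  obtains g h where "0 < g" "g \<le> t" "u^2 = 5*g^4 + 2*g^2*h^2 + h^4"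
proof -
  have u4: "(u^2)^2 = c^2 + u^2*(4*t^2) + 16*t^4"
    using assms(3) by (simp add: power_mult_distrib flip: power_mult)
  hence "u^2*(4*t^2) < u^2*u^2" using assms(2) by (simp add: power2_eq_square[of "u^2"])
  hence "4*t^2 < u^2" by (metis mult_less_cancel1)
  hence "2*t^2 \<le> u^2" by simp
  then obtain m where m: "u^2 = m + 2*t^2" by (metis add.commute le_iff_add)
  have "m^2 = c^2 + 4*(5*t^4)"
    using u4 unfolding m by (simp add: power2_eq_square power4_eq_xxxx algebra_simps)
  then obtain d where d: "m = c + 2*d" "d*(c + d) = 5*t^4" by (rule square_eq_square_add_4_mult)
  have "coprime (u^2) t" using assms(1) by simp
  moreover have "u^2 = (2*t)*t + m" using m by (simp add: power2_eq_square)
  ultimately have "coprime m t" using coprime_mult_add_iff by metis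
  moreover have "coprime 5 m"
  proof (rule prime_imp_coprime)
    show "prime (5::nat)" by simp
    show "\<not> 5 dvd m"
    proof
      assume "5 dvd m"
      hence "5 dvd u" "5 dvd t" using five_dvd_if_square_eq_add_twice_square[OF m] by auto
      thus False using coprime_common_divisor[OF assms(1)] by force
    qed
  qed
  ultimately have cop_m: "coprime m (5*t^4)" by (simp add: coprime_commute)
  have "coprime d (c + d)"
  proof (rule coprimeI)
    fix g assume g: "g dvd d" "g dvd c + d"
    hence "g dvd (c + d) + d" by simp
    hence "g dvd m" unfolding d(1) by (simp add: mult_2 add.assoc)
    moreover have "g dvd 5*t^4" using g(1) d(2) by (metis dvd_mult2)
    ultimately show "is_unit g" using cop_m coprime_common_divisor by blast
  qed
  then obtain g h where t: "t = g*h"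
    and gh: "d = 5*g^4 \<and> c + d = h^4 \<or> d = g^4 \<and> c + d = 5*h^4"
    using d(2) by (rule coprime_mult_eq_five_fourth_power)
  have pos: "0 < g" "0 < h" "g \<le> t" "h \<le> t" using assms(2) t by auto
  have "u^2 = (c + d) + d + 2*g^2*h^2" using m d(1) t by (simp add: power_mult_distrib)
  with gh have "u^2 = 5*g^4 + 2*g^2*h^2 + h^4 \<or> u^2 = 5*h^4 + 2*h^2*g^2 + g^4" by auto
  thus ?thesis using that pos by blast
qed

lemma quartic_not_square_nat:
  fixes a c w :: nat
  assumes "0 < a"
  shows "w^2 \<noteq> 5*a^4 + 2*a^2*c^2 + c^4"
  using assms
proof (induction a arbitrary: c w rule: less_induct)
  case (less a)
  show ?case
  proof
    assume "w^2 = 5*a^4 + 2*a^2*c^2 + c^4"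
    then obtain a' c' w' where a': "0 < a'" "a' \<le> a" "coprime a' c'"
      and w': "w'^2 = 5*a'^4 + 2*a'^2*c'^2 + c'^4"
      by (rule quartic_square_coprime_reduction[OF less.prems])
    have "even a'" using a'(3) w' by (rule quartic_square_parity)
    hence "odd c'" using a'(3) by (metis coprime_common_divisor_nat even_numeral odd_one dvd_refl)
    obtain u v where uv: "a' = u*v" "coprime u v" "u^4 = c'^2 + u^2*v^2 + v^4"
      using a'(3) w' by (rule quartic_square_factor)
    have "odd u" using \<open>odd c'\<close> uv(3) by (rule quartic_factor_odd)
    with \<open>even a'\<close> obtain t where t: "v = 2*t" using uv(1) by auto
    have "0 < u" "0 < t" using a'(1) uv(1) t by auto
    moreover have "coprime u t" using uv(2) t by simp
    ultimately obtain g h where "0 < g" "g \<le> t" "u^2 = 5*g^4 + 2*g^2*h^2 + h^4"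
      using uv(3) unfolding t by (blast elim: quartic_descent_step)
    moreover have "t < a'" using \<open>0 < u\<close> \<open>0 < t\<close> uv(1) t by simp
    ultimately show False using less.IH a'(2) by fastforce
  qed
qed

lemma quartic_not_square_int:
  fixes a c w :: int
  assumes "a \<noteq> 0"
  shows "w^2 \<noteq> 5*a^4 + 2*a^2*c^2 + c^4"
proof
  define A C W where "A = nat \<bar>a\<bar>" and "C = nat \<bar>c\<bar>" and "W = nat \<bar>w\<bar>"
  assume "w^2 = 5*a^4 + 2*a^2*c^2 + c^4"
  hence "int (W^2) = int (5*A^4 + 2*A^2*C^2 + C^4)" unfolding A_def C_def W_def by simp
  hence "W^2 = 5*A^4 + 2*A^2*C^2 + C^4" by (simp only: of_nat_eq_iff)
  moreover have "0 < A" using assms unfolding A_def by simp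
  ultimately show False using quartic_not_square_nat by blast
qed

lemma rat_denominator_exists: "\<exists>d::int. 0 < d \<and> of_int d * (q::rat) \<in> \<int>"
proof -
  obtain n d where "quotient_of q = (n, d)" by fastforce
  hence "0 < d" "q = of_int n / of_int d" by (simp_all add: quotient_of_denom_pos quotient_of_div)
  thus ?thesis by (intro exI[of _ d]) simp
qed

lemma quartic_not_square_rat:
  fixes p c w :: rat
  assumes "p \<noteq> 0"
  shows "w^2 \<noteq> 5*p^4 + 2*p^2*c^2 + c^4"
proof
  assume eq: "w^2 = 5*p^4 + 2*p^2*c^2 + c^4"
  obtain d1 :: int where "0 < d1" "of_int d1 * p \<in> \<int>" using rat_denominator_exists by blast
  obtain d2 :: int where "0 < d2" "of_int d2 * c \<in> \<int>" using rat_denominator_exists by blast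
  obtain d3 :: int where "0 < d3" "of_int d3 * w \<in> \<int>" using rat_denominator_exists by blast
  define D :: rat where "D = of_int (d1*d2*d3)"
  have "D * p = of_int (d2*d3) * (of_int d1 * p)" "D * c = of_int (d1*d3) * (of_int d2 * c)"
    "D * (D * w) = of_int (d1*d2*d1*d2*d3) * (of_int d3 * w)"
    unfolding D_def by (simp_all add: algebra_simps)
  hence "D * p \<in> \<int>" "D * c \<in> \<int>" "D * (D * w) \<in> \<int>"
    using \<open>of_int d1 * p \<in> \<int>\<close> \<open>of_int d2 * c \<in> \<int>\<close> \<open>of_int d3 * w \<in> \<int>\<close>
    by (simp_all only:) (simp_all add: Ints_mult)
  then obtain P C W :: int
    where P: "D * p = of_int P" and C: "D * c = of_int C" and W: "D * (D * w) = of_int W"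
    by (metis Ints_cases)
  have "(D*(D*w))^2 = D^4 * (5*p^4 + 2*p^2*c^2 + c^4)" unfolding eq[symmetric] by algebra
  also have "\<dots> = 5*(D*p)^4 + 2*(D*p)^2*(D*c)^2 + (D*c)^4" by algebra
  finally have "(of_int W)^2 = 5*(of_int P)^4 + 2*(of_int P)^2*(of_int C)^2 + (of_int C :: rat)^4"
    unfolding P C W .
  hence "of_int (W^2) = (of_int (5*P^4 + 2*P^2*C^2 + C^4) :: rat)" by simp
  hence "W^2 = 5*P^4 + 2*P^2*C^2 + C^4" by (simp only: of_int_eq_iff)
  moreover have "P \<noteq> 0"
    using P assms \<open>0 < d1\<close> \<open>0 < d2\<close> \<open>0 < d3\<close> unfolding D_def by auto
  ultimately show False using quartic_not_square_int by blast
qed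

section \<open>Points of order 5 on y^2 = x^3 + a x^2 + b x\<close>

lemma ec_add_Inf_right [simp]: "ec_add a b P Inf = P"
  by (cases P) (simp_all add: ec_add_def)

lemma ec_add_Pt_eq_Inf_iff:
  "ec_add a b (Pt x1 y1) (Pt x2 y2) = Inf \<longleftrightarrow> x1 = x2 \<and> y1 = - y2"
  by (simp add: ec_add_def Let_def)

lemma ec_add_chord:
  assumes "x1 \<noteq> x2" "m = (y2 - y1)/(x2 - x1)"
  shows "ec_add a b (Pt x1 y1) (Pt x2 y2) =
    Pt (m^2 - a - x1 - x2) (- (y1 + m*((m^2 - a - x1 - x2) - x1)))"
  using assms by (simp add: ec_add_def Let_def)

lemma ec_add_tangent:
  assumes "y1 \<noteq> - y2" "l = (3*x^2 + 2*a*x + b)/(2*y1)"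
  shows "ec_add a b (Pt x y1) (Pt x y2) =
    Pt (l^2 - a - x - x) (- (y1 + l*((l^2 - a - x - x) - x)))"
  using assms by (simp add: ec_add_def Let_def)

lemma chord_on_curve:
  fixes a b x1 y1 x2 y2 m :: rat
  assumes "y1^2 = x1^3 + a*x1^2 + b*x1" "y2^2 = x2^3 + a*x2^2 + b*x2"
    and "x1 \<noteq> x2" "m*(x2 - x1) = y2 - y1"
  defines "x3 \<equiv> m^2 - a - x1 - x2"
  shows "on_curve a b (Pt x3 (- (y1 + m*(x3 - x1))))"
proof -
  have "(x3^3 + a*x3^2 + b*x3 - (y1 + m*(x3 - x1))^2)*(x2 - x1)
     = (x2^3 + a*x2^2 + b*x2 - (y1 + m*(x2 - x1))^2)*(x3 - x1)
     + (x1^3 + a*x1^2 + b*x1 - y1^2)*(x2 - x3)"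
    unfolding x3_def by algebra
  hence "(y1 + m*(x3 - x1))^2 = x3^3 + a*x3^2 + b*x3" using assms by simp
  thus ?thesis unfolding on_curve_def ecpt.case power2_minus .
qed

lemma tangent_on_curve:
  fixes a b x y l :: rat
  assumes "y^2 = x^3 + a*x^2 + b*x" "2*l*y = 3*x^2 + 2*a*x + b"
  defines "z \<equiv> l^2 - a - x - x"
  shows "on_curve a b (Pt z (- (y + l*(z - x))))"
proof -
  have "z^3 + a*z^2 + b*z - (y + l*(z - x))^2
     = (x^3 + a*x^2 + b*x - y^2) + (z - x)*(3*x^2 + 2*a*x + b - 2*l*y)"
    unfolding z_def by algebra
  hence "(y + l*(z - x))^2 = z^3 + a*z^2 + b*z" using assms by simp
  thus ?thesis unfolding on_curve_def ecpt.case power2_minus .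
qed

lemma ec_add_on_curve:
  assumes "on_curve a b P" "on_curve a b Q"
  shows "on_curve a b (ec_add a b P Q)"
proof (cases P; cases Q)
  fix x1 y1 x2 y2 assume P: "P = Pt x1 y1" and Q: "Q = Pt x2 y2"
  have c1: "y1^2 = x1^3 + a*x1^2 + b*x1" and c2: "y2^2 = x2^3 + a*x2^2 + b*x2"
    using assms P Q by (simp_all add: on_curve_def)
  consider "x1 = x2" "y1 = - y2" | "x1 = x2" "y1 \<noteq> - y2" | "x1 \<noteq> x2" by blast
  thus ?thesis
  proof cases
    case 1
    thus ?thesis using P Q by (simp add: ec_add_def on_curve_def)
  next
    case 2
    define l where "l = (3*x1^2 + 2*a*x1 + b)/(2*y1)"
    have "y1^2 = y2^2" using c1 c2 2 by simp
    hence "y1 \<noteq> 0" using 2 by auto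
    hence "2*l*y1 = 3*x1^2 + 2*a*x1 + b" unfolding l_def by simp
    from tangent_on_curve[OF c1 this] show ?thesis
      using P Q 2 ec_add_tangent[OF 2(2) l_def] by simp
  next
    case 3
    define m where "m = (y2 - y1)/(x2 - x1)"
    have "m*(x2 - x1) = y2 - y1" using 3 unfolding m_def by simp
    from chord_on_curve[OF c1 c2 3 this] show ?thesis
      using P Q ec_add_chord[OF 3 m_def] by simp
  qed
qed (use assms in \<open>simp_all add: ec_add_def\<close>)

lemma ec_smul_on_curve: "on_curve a b P \<Longrightarrow> on_curve a b (ec_smul a b k P)"
  by (induction k) (simp add: on_curve_def, simp add: ec_add_on_curve)

lemma ec_smul_shift:
  assumes "ec_smul a b i P = ec_smul a b j P"
  shows "ec_smul a b (i + k) P = ec_smul a b (j + k) P"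
  by (induction k) (simp_all add: assms)

lemma chord_slope_eq_tangent_slope:
  fixes a b x1 y1 x2 y2 m :: rat
  assumes "y1^2 = x1^3 + a*x1^2 + b*x1" "y2^2 = x2^3 + a*x2^2 + b*x2"
    and "x1 \<noteq> x2" "m*(x2 - x1) = y2 - y1" "m^2 - a - x1 - x2 = x2"
  shows "2*m*y2 = 3*x2^2 + 2*a*x2 + b"
proof -
  have "(x1 - x2)*(2*m*y2 - (3*x2^2 + 2*a*x2 + b)) =
     ((y2 + m*(x1 - x2))^2 - y2^2) - ((x1^3 + a*x1^2 + b*x1) - (x2^3 + a*x2^2 + b*x2))
     + (x1 - x2)^2*(a + x1 + 2*x2 - m^2)"
    by algebra
  also have "\<dots> = 0"
  proof -
    have "y1 = y2 + m*(x1 - x2)" "m^2 = a + x1 + 2*x2"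
      using assms(4,5) by (simp_all add: algebra_simps)
    thus ?thesis using assms(1,2) by simp
  qed
  finally show ?thesis using assms(3) by simp
qed

lemma order_five_abscissa_ne_triple:
  assumes "on_curve a b P" "has_order a b P 5" "P = Pt x y" "ec_smul a b 3 P = Pt x3 y3"
  shows "x \<noteq> x3"
proof
  assume "x = x3"
  have "y3^2 = y^2" using ec_smul_on_curve[OF assms(1), of 3] assms(1,3,4) \<open>x = x3\<close>
    by (simp add: on_curve_def)
  moreover have "ec_smul a b 4 P \<noteq> Inf" using assms(2) by (simp add: has_order_def)
  hence "y3 \<noteq> - y"
    using assms(3,4) \<open>x = x3\<close> by (auto simp: eval_nat_numeral ec_add_Pt_eq_Inf_iff)
  ultimately have "ec_smul a b 3 P = ec_smul a b 1 P"
    using assms(3,4) \<open>x = x3\<close> by (auto simp: power2_eq_iff)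
  from ec_smul_shift[OF this, of 2] have "ec_smul a b 5 P = ec_smul a b 3 P"
    by (simp only: arith_simps one_plus_numeral)
  moreover have "ec_smul a b 5 P = Inf" "ec_smul a b 3 P \<noteq> Inf"
    using assms(2) unfolding has_order_def by auto
  ultimately show False by simp
qed

text \<open>As 5P = O, the chord through P and 3P meets the curve again at -4P = P, so it is the
tangent at P and 3P = -2P; then the chord through P and 2P meets it again at -3P = 2P, so it is
the tangent at 2P.\<close>

lemma order_five_tangent_abscissae:
  fixes a b :: rat
  assumes "on_curve a b P" "has_order a b P 5"
  obtains x y z w l m where "P = Pt x y"
    "y^2 = x^3 + a*x^2 + b*x" "w^2 = z^3 + a*z^2 + b*z" "x \<noteq> z"
    "2*l*y = 3*x^2 + 2*a*x + b" "z = l^2 - a - x - x"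
    "2*m*w = 3*z^2 + 2*a*z + b" "x = m^2 - a - z - z"
proof -
  let ?k = "\<lambda>j. ec_smul a b j P"
  have nz: "?k j \<noteq> Inf" if "0 < j" "j < 5" for j
    using assms(2) that by (simp add: has_order_def)
  have k2: "?k 2 = ec_add a b P P" and k3: "?k 3 = ec_add a b P (?k 2)"
    and k4: "?k 4 = ec_add a b P (?k 3)" and k5: "ec_add a b P (?k 4) = Inf"
    using assms(2) by (simp_all add: has_order_def eval_nat_numeral)
  have curve: "y^2 = x^3 + a*x^2 + b*x" if "?k j = Pt x y" for j x y
    using ec_smul_on_curve[OF assms(1), of j] that by (simp add: on_curve_def)
  obtain x y where P: "P = Pt x y" using nz[of 1] by (cases P) auto
  obtain z w where P2: "?k 2 = Pt z w" using nz[of 2] by (cases "?k 2") auto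
  obtain x3 y3 where P3: "?k 3 = Pt x3 y3" using nz[of 3] by (cases "?k 3") auto
  have cx: "y^2 = x^3 + a*x^2 + b*x" using curve[of 1 x y] P by simp
  have cz: "w^2 = z^3 + a*z^2 + b*z" and c3: "y3^2 = x3^3 + a*x3^2 + b*x3"
    using curve P2 P3 by blast+
  have "x \<noteq> x3" using assms P P3 by (rule order_five_abscissa_ne_triple)
  have "y \<noteq> 0" using nz[of 2] k2 P by (auto simp: ec_add_Pt_eq_Inf_iff)
  define l where "l = (3*x^2 + 2*a*x + b)/(2*y)"
  have tl: "2*l*y = 3*x^2 + 2*a*x + b" using \<open>y \<noteq> 0\<close> unfolding l_def by simp
  have z: "z = l^2 - a - x - x"
    using k2 P2 P ec_add_tangent[OF _ l_def, of y] \<open>y \<noteq> 0\<close> by simp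
  define v where "v = (y3 - y)/(x3 - x)"
  have "v^2 - a - x - x3 = x"
    using k5 k4 P3 P ec_add_chord[OF \<open>x \<noteq> x3\<close> v_def] by (simp add: ec_add_Pt_eq_Inf_iff)
  moreover have "v*(x - x3) = y - y3"
    using \<open>x \<noteq> x3\<close> unfolding v_def by (simp add: field_simps)
  ultimately have "2*v*y = 3*x^2 + 2*a*x + b"
    using chord_slope_eq_tangent_slope[OF c3 cx \<open>x \<noteq> x3\<close>[symmetric]]
    by (simp add: algebra_simps)
  hence "v = l" using tl \<open>y \<noteq> 0\<close> by (simp add: l_def field_simps)
  hence "x3 = z" using \<open>v^2 - a - x - x3 = x\<close> z by simp
  hence "x \<noteq> z" using \<open>x \<noteq> x3\<close> by simp
  define m where "m = (w - y)/(z - x)"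
  have "m^2 - a - x - z = z"
    using k3 P3 P2 P ec_add_chord[OF \<open>x \<noteq> z\<close> m_def] \<open>x3 = z\<close> by simp
  moreover have "m*(z - x) = w - y" using \<open>x \<noteq> z\<close> unfolding m_def by simp
  ultimately have "2*m*w = 3*z^2 + 2*a*z + b"
    using chord_slope_eq_tangent_slope[OF cx cz \<open>x \<noteq> z\<close>] by simp
  moreover have "x = m^2 - a - z - z" using \<open>m^2 - a - x - z = z\<close> by simp
  ultimately show ?thesis using that P cx cz \<open>x \<noteq> z\<close> tl z by blast
qed

lemma tangent_abscissa:
  fixes a b x y l :: rat
  assumes "y^2 = x^3 + a*x^2 + b*x" "2*l*y = 3*x^2 + 2*a*x + b"
  shows "4*y^2*(l^2 - a - x - x) = (x^2 - b)^2"
proof -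
  have "4*y^2*(l^2 - a - x - x) = (2*l*y)^2 - 4*y^2*(a + 2*x)" by algebra
  also have "\<dots> = (3*x^2 + 2*a*x + b)^2 - 4*(x^3 + a*x^2 + b*x)*(a + 2*x)" using assms by simp
  also have "\<dots> = (x^2 - b)^2" by algebra
  finally show ?thesis .
qed

lemma tangent_point_not_on_axis:
  fixes a n x y l :: rat
  assumes "n \<noteq> 0" "y^2 = x^3 + a*x^2 - n^2*x" "2*l*y = 3*x^2 + 2*a*x - n^2"
  shows "y \<noteq> 0"
proof
  assume "y = 0"
  have "x*(x^2 + a*x - n^2) = 0" using assms(2) \<open>y = 0\<close> by algebra
  moreover have tangent: "3*x^2 + 2*a*x - n^2 = 0" using assms(3) \<open>y = 0\<close> by simp
  moreover have "x \<noteq> 0" using tangent assms(1) by auto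
  ultimately have "x^2 + a*x - n^2 = 0" by simp
  hence "x^2 + n^2 = 0" using tangent by algebra
  thus False using assms(1) by (simp add: add_nonneg_eq_0_iff)
qed

lemma tangent_abscissa_nonzero_square:
  fixes a n x y l z :: rat
  assumes "n \<noteq> 0" "y^2 = x^3 + a*x^2 - n^2*x" "2*l*y = 3*x^2 + 2*a*x - n^2"
    and "z = l^2 - a - x - x"
  obtains s where "s \<noteq> 0" "z = s^2" "4*y^2*z = (x^2 + n^2)^2"
proof
  have "y \<noteq> 0" using assms(1-3) by (rule tangent_point_not_on_axis)
  show dz: "4*y^2*z = (x^2 + n^2)^2"
    using tangent_abscissa[where b = "- (n^2)"] assms(2-4) by simp
  have "x^2 + n^2 \<noteq> 0" using assms(1) by (simp add: add_nonneg_eq_0_iff)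
  thus "(x^2 + n^2)/(2*y) \<noteq> 0" using \<open>y \<noteq> 0\<close> by simp
  show "z = ((x^2 + n^2)/(2*y))^2"
    using dz \<open>y \<noteq> 0\<close> by (simp add: field_simps power2_eq_square)
qed

lemma mutual_tangent_abscissae_relation:
  fixes a n x y z w :: rat
  assumes "y^2 = x^3 + a*x^2 - n^2*x" "w^2 = z^3 + a*z^2 - n^2*z" "x \<noteq> z"
    and "4*y^2*z = (x^2 + n^2)^2" "4*w^2*x = (z^2 + n^2)^2"
  shows "x*z*(x + z)^2 = 5*(x*z)^2 + 2*n^2*(x*z) + n^4"
proof -
  have "(x - z)*(x*z*(x + z)^2 - (5*(x*z)^2 + 2*n^2*(x*z) + n^4)) = 0"
    using assms(1,2,4,5) by algebra
  thus ?thesis using assms(3) by simp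
qed

theorem proposition7p7:
  fixes \<alpha> n :: rat
  assumes "n \<noteq> 0"
  shows "\<not> (\<exists>P. on_curve \<alpha> (- (n^2)) P \<and> has_order \<alpha> (- (n^2)) P 5)"
proof
  assume "\<exists>P. on_curve \<alpha> (- (n^2)) P \<and> has_order \<alpha> (- (n^2)) P 5"
  then obtain P where "on_curve \<alpha> (- (n^2)) P" "has_order \<alpha> (- (n^2)) P 5" by blast
  then obtain x y z w l m where "P = Pt x y"
    and hx: "y^2 = x^3 + \<alpha>*x^2 + - (n^2)*x" and hz: "w^2 = z^3 + \<alpha>*z^2 + - (n^2)*z"
    and "x \<noteq> z"
    and hl: "2*l*y = 3*x^2 + 2*\<alpha>*x + - (n^2)" and z: "z = l^2 - \<alpha> - x - x"
    and hm: "2*m*w = 3*z^2 + 2*\<alpha>*z + - (n^2)" and x: "x = m^2 - \<alpha> - z - z"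
    by (rule order_five_tangent_abscissae)
  have cx: "y^2 = x^3 + \<alpha>*x^2 - n^2*x" and tl: "2*l*y = 3*x^2 + 2*\<alpha>*x - n^2"
    and cz: "w^2 = z^3 + \<alpha>*z^2 - n^2*z" and tm: "2*m*w = 3*z^2 + 2*\<alpha>*z - n^2"
    using hx hl hz hm by simp_all
  obtain s where s: "s \<noteq> 0" "z = s^2" and dz: "4*y^2*z = (x^2 + n^2)^2"
    using assms cx tl z by (rule tangent_abscissa_nonzero_square)
  obtain t where t: "t \<noteq> 0" "x = t^2" and dx: "4*w^2*x = (z^2 + n^2)^2"
    using assms cz tm x by (rule tangent_abscissa_nonzero_square)
  have "x*z*(x + z)^2 = 5*(x*z)^2 + 2*n^2*(x*z) + n^4"
    using cx cz \<open>x \<noteq> z\<close> dz dx by (rule mutual_tangent_abscissae_relation)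
  moreover have "x*z = (s*t)^2" using s t by (simp add: power_mult_distrib)
  ultimately have "(s*t*(x + z))^2 = 5*(s*t)^4 + 2*(s*t)^2*n^2 + n^4"
    by (simp add: power_mult_distrib power4_eq_xxxx power2_eq_square algebra_simps)
  thus False using quartic_not_square_rat s(1) t(1) by simp
qed

end
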